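(* There exists $\Lambda>0$ such that for each $K\ge1$ there exists $\nu_K>0$ such that any collection of $\Lambda K$ or more distinct squares in $Col_K$ is $\nu_K$-transverse.
   Context: $Col_K$ is the collection of closed dyadic squares of side length $1/K$ in $[0,1]^2$ ($K$ a power of 2). For a polynomial $P(r,s)$, $\|P\|$ is the $\ell^1$ sum of its coefficients. With $M\ge1000$, sets $S_1,\dots,S_M\subset[0,1]^2$ are $\nu$-transverse if for every polynomial $P$ with $\deg P\le100$ and $\|P\|=1$ and every choice of $\frac M{100}$ different sets $S_{i_1},\dots,S_{i_{M/100}}$ there is at least one $S_{i_j}$ with $|P(r,s)|\ge\nu$ for all $(r,s)\in S_{i_j}$. *)

theory Defs
  imports Complex_Main
begin

definition dyadic_square :: "nat \<Rightarrow> nat \<Rightarrow> nat \<Rightarrow> (real \<times> real) set" where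
  "dyadic_square K a b = {(r, s). real a / real K \<le> r \<and> r \<le> (real a + 1) / real K
                                \<and> real b / real K \<le> s \<and> s \<le> (real b + 1) / real K}"

definition Col :: "nat \<Rightarrow> (real \<times> real) set set" where
  "Col K = {dyadic_square K a b | a b. a < K \<and> b < K}"

text \<open>A bivariate real polynomial of degree at most 100 is given by its coefficients
  c i j (coefficient of r^i s^j), only those with i + j \<le> 100 matter.\<close>
definition poly2 :: "(nat \<Rightarrow> nat \<Rightarrow> real) \<Rightarrow> real \<Rightarrow> real \<Rightarrow> real" where
  "poly2 c r s = (\<Sum>i\<le>100. \<Sum>j\<le>100 - i. c i j * r ^ i * s ^ j)"

definition pnorm :: "(nat \<Rightarrow> nat \<Rightarrow> real) \<Rightarrow> real" where
  "pnorm c = (\<Sum>i\<le>100. \<Sum>j\<le>100 - i. \<bar>c i j\<bar>)"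

text \<open>A finite family C of M = card C \<ge> 1000 distinct sets is nu-transverse if for every
  polynomial of degree \<le> 100 with norm 1 and every choice of M/100 of the sets
  (equivalently, by monotonicity, at least M/100 of them), one of the chosen sets
  has |P| \<ge> nu everywhere on it.\<close>
definition transverse :: "real \<Rightarrow> (real \<times> real) set set \<Rightarrow> bool" where
  "transverse \<nu> C \<longleftrightarrow> finite C \<and> card C \<ge> 1000 \<and>
     (\<forall>c. pnorm c = 1 \<longrightarrow>
       (\<forall>I \<subseteq> C. real (card I) \<ge> real (card C) / 100 \<longrightarrow>
          (\<exists>S\<in>I. \<forall>(r, s)\<in>S. \<bar>poly2 c r s\<bar> \<ge> \<nu>)))"

end

theory Submission
  imports Defs "HOL-Analysis.Analysis"
begin

text \<open>A nonzero polynomial \<open>P\<close> of degree at most \<open>d\<close> meets only \<open>O(d\<^sup>2 K)\<close> of the \<open>K\<^sup>2\<close>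
  closed grid squares of side \<open>1/K\<close>. A square meeting the zero set either has a zero on an edge,
  or has a zero inside but none on its boundary; then an extremum of \<open>P\<close> in the square is a
  zero of \<open>\<partial>P/\<partial>r\<close>, and one inducts on the degree in \<open>r\<close>. Edge zeros are counted line by
  line: a grid line carries at most \<open>d\<close> roots of the restricted polynomial, each in at most two
  cells, except on the at most \<open>d\<close> lines where the restriction vanishes identically.

  Hence a family of more than \<open>202000 K\<close> squares contains, for every normalized \<open>P\<close>, a square
  free of zeros. By compactness of the coefficient sphere and of the squares, some square of
  the family carries \<open>\<bar>P\<bar> \<ge> \<nu>\<close> with \<open>\<nu>\<close> independent of \<open>P\<close>, and \<open>\<nu>\<^sub>K\<close> is the least such
  constant over the finitely many families.\<close>

section \<open>Grid cells meeting the zero set of a polynomial\<close>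

definition grid_interval :: "nat \<Rightarrow> nat \<Rightarrow> real set" where
  "grid_interval K a = {real a / real K .. (real a + 1) / real K}"

lemma dyadic_square_eq_Times: "dyadic_square K a b = grid_interval K a \<times> grid_interval K b"
  by (auto simp: dyadic_square_def grid_interval_def)

lemma mem_grid_interval_floor:
  assumes "K \<ge> 1" "x \<in> grid_interval K b"
  shows "b \<in> {nat \<lfloor>x * real K\<rfloor>, nat \<lfloor>x * real K\<rfloor> - 1}"
proof -
  have "real b \<le> x * real K" "x * real K \<le> real b + 1"
    using assms by (auto simp: grid_interval_def divide_le_eq le_divide_eq)
  then have "int b \<le> \<lfloor>x * real K\<rfloor>" "\<lfloor>x * real K\<rfloor> \<le> int b + 1"
    by (simp_all add: le_floor_iff floor_le_iff)
  then show ?thesis by auto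
qed

definition zero_cells :: "nat \<Rightarrow> (real \<Rightarrow> real) \<Rightarrow> nat set" where
  "zero_cells K g = {b. b < K \<and> (\<exists>s\<in>grid_interval K b. g s = 0)}"

lemma zero_cells_subset: "zero_cells K g \<subseteq> {..<K}"
  by (auto simp: zero_cells_def)

lemma finite_zero_cells: "finite (zero_cells K g)"
  using zero_cells_subset finite_subset by blast

lemma card_zero_cells_le: "card (zero_cells K g) \<le> K"
  using card_mono[OF _ zero_cells_subset] by fastforce

text \<open>Each root lies in at most two of the closed cells.\<close>
lemma card_zero_cells_polyfun:
  fixes e :: "nat \<Rightarrow> real"
  assumes K: "K \<ge> 1" and nz: "\<exists>j\<le>m. e j \<noteq> 0"
  shows "card (zero_cells K (\<lambda>s. \<Sum>j\<le>m. e j * s ^ j)) \<le> 2 * m"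
proof -
  define R where "R = {z. (\<Sum>j\<le>m. e j * z ^ j) = 0}"
  have "finite R" and "card R \<le> m"
    using nz polyfun_roots_finite polyfun_roots_card unfolding R_def by blast+
  let ?cells = "\<lambda>x. {nat \<lfloor>x * real K\<rfloor>, nat \<lfloor>x * real K\<rfloor> - 1}"
  have "zero_cells K (\<lambda>s. \<Sum>j\<le>m. e j * s ^ j) \<subseteq> (\<Union>x\<in>R. ?cells x)"
    using mem_grid_interval_floor[OF K] by (fastforce simp: zero_cells_def R_def)
  then have "card (zero_cells K (\<lambda>s. \<Sum>j\<le>m. e j * s ^ j)) \<le> card (\<Union>x\<in>R. ?cells x)"
    by (rule card_mono[rotated]) (use \<open>finite R\<close> in auto)
  also have "\<dots> \<le> (\<Sum>x\<in>R. card (?cells x))"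
    by (rule card_UN_le[OF \<open>finite R\<close>])
  also have "\<dots> \<le> (\<Sum>x\<in>R. 2)"
    by (rule sum_mono) (simp add: card_insert_le_m1)
  also have "\<dots> \<le> 2 * m" using \<open>card R \<le> m\<close> by simp
  finally show ?thesis .
qed

definition bipoly :: "nat \<Rightarrow> nat \<Rightarrow> (nat \<Rightarrow> nat \<Rightarrow> real) \<Rightarrow> real \<Rightarrow> real \<Rightarrow> real" where
  "bipoly n m c r s = (\<Sum>i\<le>n. \<Sum>j\<le>m. c i j * r ^ i * s ^ j)"

definition coeffs_nonzero :: "nat \<Rightarrow> nat \<Rightarrow> (nat \<Rightarrow> nat \<Rightarrow> real) \<Rightarrow> bool" where
  "coeffs_nonzero n m c \<longleftrightarrow> (\<exists>i\<le>n. \<exists>j\<le>m. c i j \<noteq> 0)"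

lemma bipoly_eq_polyfun_in_snd: "bipoly n m c r s = (\<Sum>j\<le>m. (\<Sum>i\<le>n. c i j * r ^ i) * s ^ j)"
  unfolding bipoly_def by (simp add: sum.swap[of _ "{..n}"] sum_distrib_left sum_distrib_right mult_ac)

lemma bipoly_transpose: "bipoly n m c r s = bipoly m n (\<lambda>j i. c i j) s r"
  unfolding bipoly_def by (simp add: sum.swap[of _ "{..n}"] mult_ac)

lemma coeffs_nonzero_transpose: "coeffs_nonzero n m c \<longleftrightarrow> coeffs_nonzero m n (\<lambda>j i. c i j)"
  by (auto simp: coeffs_nonzero_def)

lemma sum_le_off_small_subset:
  fixes h :: "'a \<Rightarrow> nat"
  assumes "finite A" "B \<subseteq> A" "card B \<le> k"
    and "\<And>a. a \<in> A \<Longrightarrow> h a \<le> L" and "\<And>a. a \<in> A - B \<Longrightarrow> h a \<le> M"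
  shows "sum h A \<le> k * L + card A * M"
proof -
  have "sum h A = sum h B + sum h (A - B)"
    using assms(1,2) by (metis sum.subset_diff add.commute)
  also have "sum h B \<le> card B * L" using sum_bounded_above[of B h L] assms(2,4) by auto
  also have "sum h (A - B) \<le> card (A - B) * M" using sum_bounded_above[of "A - B" h M] assms(5) by auto
  also have "card B * L \<le> k * L" using assms(3) by simp
  also have "card (A - B) * M \<le> card A * M"
    using assms(1,2) by (simp add: card_Diff_subset finite_subset)
  finally show ?thesis by simp
qed

text \<open>A vertical line on which the polynomial vanishes identically is a root of the
  nonzero univariate polynomial \<open>\<lambda>r. \<Sum>i\<le>n. c i j r^i\<close>; there are at most \<open>n\<close> such lines.\<close>
lemma sum_card_zero_cells_vertical_lines:
  assumes K: "K \<ge> 1" and nz: "coeffs_nonzero n m c"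
  shows "(\<Sum>a\<le>K. card (zero_cells K (bipoly n m c (real a / real K)))) \<le> n * K + (K + 1) * (2 * m)"
proof -
  define B where "B = {a\<in>{..K}. \<forall>j\<le>m. (\<Sum>i\<le>n. c i j * (real a / real K) ^ i) = 0}"
  from nz obtain i0 j0 where ij: "i0 \<le> n" "j0 \<le> m" "c i0 j0 \<noteq> 0" by (auto simp: coeffs_nonzero_def)
  have "card B \<le> n"
  proof -
    define R where "R = {z. (\<Sum>i\<le>n. c i j0 * z ^ i) = 0}"
    have "finite R" "card R \<le> n"
      using polyfun_roots_finite[of "\<lambda>i. c i j0" i0 n] polyfun_roots_card[of "\<lambda>i. c i j0" i0 n] ij
      by (auto simp: R_def)
    have "inj_on (\<lambda>a. real a / real K) B" using K by (auto simp: inj_on_def)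
    moreover have "(\<lambda>a. real a / real K) ` B \<subseteq> R" using ij(2) by (auto simp: B_def R_def)
    ultimately show ?thesis
      using card_mono[OF \<open>finite R\<close>] card_image \<open>card R \<le> n\<close> by (metis le_trans)
  qed
  have "(\<Sum>a\<le>K. card (zero_cells K (bipoly n m c (real a / real K)))) \<le> n * K + card {..K} * (2 * m)"
  proof (rule sum_le_off_small_subset[where B=B])
    fix a assume "a \<in> {..K} - B"
    then have "\<exists>j\<le>m. (\<Sum>i\<le>n. c i j * (real a / real K) ^ i) \<noteq> 0" by (auto simp: B_def)
    from card_zero_cells_polyfun[OF K this]
    show "card (zero_cells K (bipoly n m c (real a / real K))) \<le> 2 * m"
      by (simp add: bipoly_eq_polyfun_in_snd[abs_def])
  qed (use \<open>card B \<le> n\<close> in \<open>auto simp: B_def card_zero_cells_le\<close>)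
  then show ?thesis by simp
qed

lemma card_adjacent_lines_le:
  fixes g :: "nat \<Rightarrow> 'a set"
  assumes "\<And>a. finite (g a)"
  shows "card {(a, b). a < K \<and> b \<in> g a \<union> g (Suc a)} \<le> 2 * (\<Sum>a\<le>K. card (g a))"
proof -
  have "{(a, b). a < K \<and> b \<in> g a \<union> g (Suc a)} = (\<Union>a<K. {a} \<times> (g a \<union> g (Suc a)))" by auto
  then have "card {(a, b). a < K \<and> b \<in> g a \<union> g (Suc a)} \<le> (\<Sum>a<K. card ({a} \<times> (g a \<union> g (Suc a))))"
    using card_UN_le[of "{..<K}"] by simp
  also have "\<dots> \<le> (\<Sum>a<K. card (g a)) + (\<Sum>a<K. card (g (Suc a)))"
    unfolding sum.distrib[symmetric] by (rule sum_mono) (simp add: card_cartesian_product card_Un_le)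
  also have "(\<Sum>a<K. card (g (Suc a))) \<le> (\<Sum>a\<le>K. card (g a))"
    using sum.atMost_shift[of "\<lambda>a. card (g a)" K] by (simp add: lessThan_Suc_atMost[symmetric])
  also have "(\<Sum>a<K. card (g a)) \<le> (\<Sum>a\<le>K. card (g a))" by (rule sum_mono2) auto
  finally show ?thesis by simp
qed

definition edge_zero_cells :: "nat \<Rightarrow> nat \<Rightarrow> nat \<Rightarrow> (nat \<Rightarrow> nat \<Rightarrow> real) \<Rightarrow> (nat \<times> nat) set" where
  "edge_zero_cells K n m c = {(a, b). a < K \<and> b < K \<and>
     (\<exists>r\<in>grid_interval K a. \<exists>s\<in>grid_interval K b. bipoly n m c r s = 0 \<and>
        (r \<in> {real a / real K, (real a + 1) / real K} \<or> s \<in> {real b / real K, (real b + 1) / real K}))}"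

lemma finite_edge_zero_cells: "finite (edge_zero_cells K n m c)"
  by (rule finite_subset[of _ "{..<K} \<times> {..<K}"]) (auto simp: edge_zero_cells_def)

lemma card_edge_zero_cells:
  assumes K: "K \<ge> 1" and nz: "coeffs_nonzero n m c"
  shows "card (edge_zero_cells K n m c) \<le> 10 * (n + m) * K"
proof -
  define c' where "c' = (\<lambda>j i. c i j)"
  define V where "V a = zero_cells K (bipoly n m c (real a / real K))" for a
  define H where "H b = zero_cells K (bipoly m n c' (real b / real K))" for b
  let ?Vs = "{(a, b). a < K \<and> b \<in> V a \<union> V (Suc a)}"
  let ?Hs = "{(b, a). b < K \<and> a \<in> H b \<union> H (Suc b)}"
  have "edge_zero_cells K n m c \<subseteq> ?Vs \<union> prod.swap ` ?Hs"
    by (auto simp: edge_zero_cells_def V_def H_def c'_def zero_cells_def add.commute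
        bipoly_transpose[of n m c] image_iff)
  then have "card (edge_zero_cells K n m c) \<le> card (?Vs \<union> prod.swap ` ?Hs)"
    by (rule card_mono[rotated]) (auto intro: finite_subset[of _ "{..<K} \<times> {..<K}"]
        simp: V_def H_def zero_cells_def)
  also have "\<dots> \<le> card ?Vs + card (prod.swap ` ?Hs)" by (rule card_Un_le)
  also have "\<dots> = card ?Vs + card ?Hs" by (simp add: card_image)
  also have "\<dots> \<le> 2 * (n * K + (K + 1) * (2 * m)) + 2 * (m * K + (K + 1) * (2 * n))"
  proof (rule add_mono)
    show "card ?Vs \<le> 2 * (n * K + (K + 1) * (2 * m))"
      using card_adjacent_lines_le[of V K] sum_card_zero_cells_vertical_lines[OF K nz]
      by (simp add: V_def finite_zero_cells)
    show "card ?Hs \<le> 2 * (m * K + (K + 1) * (2 * n))"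
      using card_adjacent_lines_le[of H K] nz sum_card_zero_cells_vertical_lines[OF K, of m n c']
      by (simp add: H_def c'_def finite_zero_cells coeffs_nonzero_transpose[of n m c])
  qed
  also have "\<dots> \<le> 10 * (n + m) * K"
    using mult_le_mono2[OF K, of "4 * (n + m)"] by (simp add: algebra_simps)
  finally show ?thesis .
qed

lemma pos_at_right_end_if_nonzero:
  fixes g :: "real \<Rightarrow> real"
  assumes "a \<le> b" "continuous_on {a..b} g" "g a > 0" "\<And>t. t \<in> {a..b} \<Longrightarrow> g t \<noteq> 0"
  shows "g b > 0"
proof (rule ccontr)
  assume "\<not> g b > 0"
  then obtain t where "a \<le> t" "t \<le> b" "g t = 0"
    using IVT2'[of g b 0 a] assms(1-3) by auto
  then show False using assms(4) by auto
qed

lemma vertical_edges_pos: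
  fixes f :: "real \<Rightarrow> real \<Rightarrow> real"
  assumes "x0 \<le> x1" "y0 \<le> y1"
    and cont_fst: "\<And>s. continuous_on {x0..x1} (\<lambda>r. f r s)"
    and cont_snd: "\<And>r. continuous_on {y0..y1} (f r)"
    and edges: "\<And>r s. r \<in> {x0..x1} \<Longrightarrow> s \<in> {y0..y1} \<Longrightarrow> r \<in> {x0, x1} \<or> s \<in> {y0, y1} \<Longrightarrow> f r s \<noteq> 0"
    and pos: "f x0 y0 > 0"
    and s: "s \<in> {y0..y1}"
  shows "f x0 s > 0" "f x1 s > 0"
proof -
  show "f x0 s > 0"
    using pos_at_right_end_if_nonzero[of y0 s "f x0"] s pos assms(1) edges
      continuous_on_subset[OF cont_snd[of x0], of "{y0..s}"] by auto
  have "f x1 y0 > 0"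
    using pos_at_right_end_if_nonzero[of x0 x1 "\<lambda>t. f t y0"] pos assms(1,2) cont_fst edges by auto
  then show "f x1 s > 0"
    using pos_at_right_end_if_nonzero[of y0 s "f x1"] s assms(1) edges
      continuous_on_subset[OF cont_snd[of x1], of "{y0..s}"] by auto
qed

text \<open>If \<open>f\<close> has a zero in a rectangle but none on its boundary, \<open>f\<close> has constant sign on the
  boundary, so an extremum of the opposite kind lies strictly between the vertical edges.\<close>
lemma rectangle_crit_point_pos:
  fixes f f' :: "real \<Rightarrow> real \<Rightarrow> real"
  assumes lt: "x0 < x1" "y0 < y1"
    and cont: "continuous_on UNIV (\<lambda>p. f (fst p) (snd p))"
    and der: "\<And>r s. ((\<lambda>r. f r s) has_real_derivative f' r s) (at r)"
    and zero: "r0 \<in> {x0..x1}" "s0 \<in> {y0..y1}" "f r0 s0 = 0"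
    and edges: "\<And>r s. r \<in> {x0..x1} \<Longrightarrow> s \<in> {y0..y1} \<Longrightarrow> r \<in> {x0, x1} \<or> s \<in> {y0, y1} \<Longrightarrow> f r s \<noteq> 0"
    and pos: "f x0 y0 > 0"
  shows "\<exists>r\<in>{x0..x1}. \<exists>s\<in>{y0..y1}. f' r s = 0"
proof -
  have "continuous_on A (\<lambda>r. f r s)" for A s
    using der by (meson DERIV_isCont continuous_at_imp_continuous_on)
  moreover have "continuous_on A (f r)" for A r
    using continuous_on_compose2[OF cont continuous_on_Pair[OF continuous_on_const continuous_on_id]]
    by (auto intro: continuous_on_subset)
  ultimately have vertical: "f x0 s > 0" "f x1 s > 0" if "s \<in> {y0..y1}" for s
    using vertical_edges_pos[of x0 x1 y0 y1 f] lt edges pos that by auto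
  define S where "S = {x0..x1} \<times> {y0..y1}"
  have "compact S" "S \<noteq> {}" "continuous_on S (\<lambda>p. f (fst p) (snd p))"
    using lt cont by (auto simp: S_def compact_Times intro: continuous_on_subset)
  then obtain pm where "pm \<in> S" "\<forall>q\<in>S. f (fst pm) (snd pm) \<le> f (fst q) (snd q)"
    using continuous_attains_inf by blast
  then obtain rm sm where min: "(rm, sm) \<in> S" "\<And>q. q \<in> S \<Longrightarrow> f rm sm \<le> f (fst q) (snd q)"
    by (metis prod.collapse)
  have "f rm sm \<le> 0" using min(2)[of "(r0, s0)"] zero by (auto simp: S_def)
  moreover have "rm \<in> {x0..x1}" "sm \<in> {y0..y1}" using min(1) by (auto simp: S_def)
  ultimately have "x0 < rm" "rm < x1"
    using vertical[of sm] by (metis atLeastAtMost_iff less_eq_real_def not_le)+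
  have "f' rm sm = 0"
  proof (rule DERIV_local_min[OF der])
    show "0 < min (rm - x0) (x1 - rm)" using \<open>x0 < rm\<close> \<open>rm < x1\<close> by simp
    show "\<forall>y. \<bar>rm - y\<bar> < min (rm - x0) (x1 - rm) \<longrightarrow> f rm sm \<le> f y sm"
    proof (intro allI impI)
      fix y assume "\<bar>rm - y\<bar> < min (rm - x0) (x1 - rm)"
      then have "(y, sm) \<in> S" using \<open>sm \<in> {y0..y1}\<close> by (auto simp: S_def)
      then show "f rm sm \<le> f y sm" using min(2) by fastforce
    qed
  qed
  then show ?thesis using \<open>rm \<in> {x0..x1}\<close> \<open>sm \<in> {y0..y1}\<close> by blast
qed

lemma rectangle_crit_point:
  fixes f f' :: "real \<Rightarrow> real \<Rightarrow> real"
  assumes lt: "x0 < x1" "y0 < y1"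
    and cont: "continuous_on UNIV (\<lambda>p. f (fst p) (snd p))"
    and der: "\<And>r s. ((\<lambda>r. f r s) has_real_derivative f' r s) (at r)"
    and zero: "r0 \<in> {x0..x1}" "s0 \<in> {y0..y1}" "f r0 s0 = 0"
    and edges: "\<And>r s. r \<in> {x0..x1} \<Longrightarrow> s \<in> {y0..y1} \<Longrightarrow> r \<in> {x0, x1} \<or> s \<in> {y0, y1} \<Longrightarrow> f r s \<noteq> 0"
  shows "\<exists>r\<in>{x0..x1}. \<exists>s\<in>{y0..y1}. f' r s = 0"
proof (cases "f x0 y0 > 0")
  case True
  then show ?thesis using rectangle_crit_point_pos[OF assms] by blast
next
  case False
  then have "- f x0 y0 > 0" using edges[of x0 y0] lt by force
  moreover have "continuous_on UNIV (\<lambda>p. - f (fst p) (snd p))" using cont by (intro continuous_intros)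
  moreover have "((\<lambda>r. - f r s) has_real_derivative - f' r s) (at r)" for r s using der by (intro DERIV_minus)
  ultimately show ?thesis
    using rectangle_crit_point_pos[of x0 x1 y0 y1 "\<lambda>r s. - f r s" "\<lambda>r s. - f' r s"] lt zero edges
    by auto
qed

definition rderiv_coeffs :: "(nat \<Rightarrow> nat \<Rightarrow> real) \<Rightarrow> nat \<Rightarrow> nat \<Rightarrow> real" where
  "rderiv_coeffs c i j = real (Suc i) * c (Suc i) j"

lemma bipoly_has_rderiv:
  "((\<lambda>r. bipoly (Suc n) m c r s) has_real_derivative bipoly n m (rderiv_coeffs c) r s) (at r)"
proof -
  have "((\<lambda>r. bipoly (Suc n) m c r s) has_real_derivative
      (\<Sum>i\<le>Suc n. \<Sum>j\<le>m. c i j * (real i * r ^ (i - 1)) * s ^ j)) (at r)"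
    unfolding bipoly_def by (rule DERIV_sum, rule DERIV_sum, auto intro!: derivative_eq_intros)
  moreover have "(\<Sum>i\<le>Suc n. \<Sum>j\<le>m. c i j * (real i * r ^ (i - 1)) * s ^ j) = bipoly n m (rderiv_coeffs c) r s"
    by (simp add: sum.atMost_Suc_shift[of _ n] bipoly_def rderiv_coeffs_def mult_ac del: sum.atMost_Suc)
  ultimately show ?thesis by simp
qed

lemma bipoly_const_in_fst:
  assumes "\<not> coeffs_nonzero n m (rderiv_coeffs c)"
  shows "bipoly (Suc n) m c r s = bipoly (Suc n) m c r' s"
proof -
  have "c (Suc i) j = 0" if "i \<le> n" "j \<le> m" for i j
    using assms that by (auto simp: coeffs_nonzero_def rderiv_coeffs_def)
  then have "bipoly (Suc n) m c r s = (\<Sum>j\<le>m. c 0 j * s ^ j)" for r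
    by (simp add: bipoly_def sum.atMost_Suc_shift[of _ n] del: sum.atMost_Suc)
  then show ?thesis by simp
qed

definition square_zero_cells :: "nat \<Rightarrow> nat \<Rightarrow> nat \<Rightarrow> (nat \<Rightarrow> nat \<Rightarrow> real) \<Rightarrow> (nat \<times> nat) set" where
  "square_zero_cells K n m c = {(a, b). a < K \<and> b < K \<and>
     (\<exists>r\<in>grid_interval K a. \<exists>s\<in>grid_interval K b. bipoly n m c r s = 0)}"

lemma finite_square_zero_cells: "finite (square_zero_cells K n m c)"
  by (rule finite_subset[of _ "{..<K} \<times> {..<K}"]) (auto simp: square_zero_cells_def)

lemma square_zero_cells_subset_edge_if_const:
  assumes "\<And>r r' s. bipoly n m c r s = bipoly n m c r' s"
  shows "square_zero_cells K n m c \<subseteq> edge_zero_cells K n m c"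
proof
  fix p assume "p \<in> square_zero_cells K n m c"
  then obtain a b r s where p: "p = (a, b)" "a < K" "b < K" "r \<in> grid_interval K a"
    "s \<in> grid_interval K b" "bipoly n m c r s = 0"
    by (auto simp: square_zero_cells_def)
  then have "real a / real K \<in> grid_interval K a" "bipoly n m c (real a / real K) s = 0"
    using assms[of "real a / real K" s r] by (auto simp: grid_interval_def)
  then show "p \<in> edge_zero_cells K n m c"
    using p unfolding edge_zero_cells_def by blast
qed

lemma square_zero_cells_Suc_subset:
  assumes K: "K \<ge> 1"
  shows "square_zero_cells K (Suc n) m c
    \<subseteq> edge_zero_cells K (Suc n) m c \<union> square_zero_cells K n m (rderiv_coeffs c)"
proof
  fix p assume "p \<in> square_zero_cells K (Suc n) m c"
  then obtain a b r0 s0 where p: "p = (a, b)" "a < K" "b < K"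
    and zero: "r0 \<in> grid_interval K a" "s0 \<in> grid_interval K b" "bipoly (Suc n) m c r0 s0 = 0"
    by (auto simp: square_zero_cells_def)
  show "p \<in> edge_zero_cells K (Suc n) m c \<union> square_zero_cells K n m (rderiv_coeffs c)"
  proof (cases "p \<in> edge_zero_cells K (Suc n) m c")
    case False
    have lt: "real a / real K < (real a + 1) / real K" "real b / real K < (real b + 1) / real K"
      using K by (simp_all add: divide_strict_right_mono)
    have cont: "continuous_on UNIV (\<lambda>q. bipoly (Suc n) m c (fst q) (snd q))"
      unfolding bipoly_def by (intro continuous_intros)
    have edges: "bipoly (Suc n) m c r s \<noteq> 0"
      if "r \<in> grid_interval K a" "s \<in> grid_interval K b"
        "r \<in> {real a / real K, (real a + 1) / real K} \<or> s \<in> {real b / real K, (real b + 1) / real K}"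
      for r s
      using False p that unfolding edge_zero_cells_def by blast
    obtain r s where "r \<in> grid_interval K a" "s \<in> grid_interval K b"
      "bipoly n m (rderiv_coeffs c) r s = 0"
      using rectangle_crit_point[OF lt cont bipoly_has_rderiv zero[unfolded grid_interval_def]]
        edges[unfolded grid_interval_def] unfolding grid_interval_def by blast
    then have "p \<in> square_zero_cells K n m (rderiv_coeffs c)"
      using p unfolding square_zero_cells_def by blast
    then show ?thesis ..
  qed simp
qed

lemma card_square_zero_cells:
  assumes K: "K \<ge> 1"
  shows "coeffs_nonzero n m c \<Longrightarrow> card (square_zero_cells K n m c) \<le> (n + 1) * (10 * (n + m) * K)"
proof (induction n arbitrary: c)
  case 0
  have "square_zero_cells K 0 m c \<subseteq> edge_zero_cells K 0 m c"
    by (rule square_zero_cells_subset_edge_if_const) (simp add: bipoly_def)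
  then have "card (square_zero_cells K 0 m c) \<le> card (edge_zero_cells K 0 m c)"
    by (rule card_mono[OF finite_edge_zero_cells])
  also have "\<dots> \<le> 10 * (0 + m) * K" by (rule card_edge_zero_cells[OF K 0])
  finally show ?case by simp
next
  case (Suc n)
  let ?B = "10 * (Suc n + m) * K"
  have edge: "card (edge_zero_cells K (Suc n) m c) \<le> ?B"
    by (rule card_edge_zero_cells[OF K Suc.prems])
  show ?case
  proof (cases "coeffs_nonzero n m (rderiv_coeffs c)")
    case True
    have "card (square_zero_cells K (Suc n) m c)
        \<le> card (edge_zero_cells K (Suc n) m c \<union> square_zero_cells K n m (rderiv_coeffs c))"
      by (rule card_mono[OF _ square_zero_cells_Suc_subset[OF K]])
        (simp add: finite_edge_zero_cells finite_square_zero_cells)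
    also have "\<dots> \<le> ?B + (n + 1) * (10 * (n + m) * K)"
      using card_Un_le edge Suc.IH[OF True] by (meson add_mono le_trans)
    also have "\<dots> \<le> ?B + (n + 1) * ?B" by (intro add_left_mono mult_left_mono) auto
    finally show ?thesis by simp
  next
    case False
    have "square_zero_cells K (Suc n) m c \<subseteq> edge_zero_cells K (Suc n) m c"
      by (rule square_zero_cells_subset_edge_if_const) (rule bipoly_const_in_fst[OF False])
    then have "card (square_zero_cells K (Suc n) m c) \<le> ?B"
      using edge card_mono[OF finite_edge_zero_cells] le_trans by blast
    then show ?thesis by simp
  qed
qed

definition trunc_coeffs :: "(nat \<Rightarrow> nat \<Rightarrow> real) \<Rightarrow> nat \<Rightarrow> nat \<Rightarrow> real" where
  "trunc_coeffs c i j = (if i + j \<le> 100 then c i j else 0)"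

lemma poly2_eq_bipoly: "poly2 c r s = bipoly 100 100 (trunc_coeffs c) r s"
  unfolding poly2_def bipoly_def
proof (rule sum.cong[OF refl])
  fix i :: nat assume "i \<in> {..100}"
  then have "(\<Sum>j\<le>100. trunc_coeffs c i j * r ^ i * s ^ j)
      = (\<Sum>j\<le>100. if j \<in> {..100 - i} then c i j * r ^ i * s ^ j else 0)"
    by (intro sum.cong) (auto simp: trunc_coeffs_def)
  also have "\<dots> = (\<Sum>j\<in>{..100} \<inter> {..100 - i}. c i j * r ^ i * s ^ j)"
    by (rule sum.inter_restrict[symmetric]) simp
  also have "{..100::nat} \<inter> {..100 - i} = {..100 - i}" by auto
  finally show "(\<Sum>j\<le>100 - i. c i j * r ^ i * s ^ j) = (\<Sum>j\<le>100. trunc_coeffs c i j * r ^ i * s ^ j)"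
    by simp
qed

lemma coeffs_nonzero_trunc_coeffs:
  assumes "pnorm c \<noteq> 0" shows "coeffs_nonzero 100 100 (trunc_coeffs c)"
proof -
  obtain i j where "i \<le> 100" "j \<le> 100 - i" "c i j \<noteq> 0"
    using assms unfolding pnorm_def by (metis (no_types, lifting) abs_0 sum.neutral atMost_iff)
  then show ?thesis unfolding coeffs_nonzero_def trunc_coeffs_def
    by (intro exI[of _ i] exI[of _ j]) auto
qed

lemma card_squares_meeting_zeros:
  assumes K: "K \<ge> 1" and "pnorm c \<noteq> 0"
  shows "card {S \<in> Col K. \<exists>(r, s)\<in>S. poly2 c r s = 0} \<le> 202000 * K"
proof -
  have "{S \<in> Col K. \<exists>(r, s)\<in>S. poly2 c r s = 0}
      \<subseteq> (\<lambda>(a, b). dyadic_square K a b) ` square_zero_cells K 100 100 (trunc_coeffs c)"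
  proof
    fix S assume "S \<in> {S \<in> Col K. \<exists>(r, s)\<in>S. poly2 c r s = 0}"
    then obtain a b where "a < K" "b < K" "S = dyadic_square K a b"
      "\<exists>r\<in>grid_interval K a. \<exists>s\<in>grid_interval K b. bipoly 100 100 (trunc_coeffs c) r s = 0"
      by (auto simp: Col_def dyadic_square_eq_Times poly2_eq_bipoly)
    then show "S \<in> (\<lambda>(a, b). dyadic_square K a b) ` square_zero_cells K 100 100 (trunc_coeffs c)"
      unfolding square_zero_cells_def by force
  qed
  then have "card {S \<in> Col K. \<exists>(r, s)\<in>S. poly2 c r s = 0}
      \<le> card (square_zero_cells K 100 100 (trunc_coeffs c))"
    by (meson card_image_le card_mono finite_imageI finite_square_zero_cells le_trans)
  also have "\<dots> \<le> (100 + 1) * (10 * (100 + 100) * K)"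
    by (rule card_square_zero_cells[OF K coeffs_nonzero_trunc_coeffs]) fact
  finally show ?thesis by simp
qed

section \<open>Uniform lower bounds by compactness\<close>

lemma finite_family_convergent_subseq:
  fixes F :: "'a \<Rightarrow> nat \<Rightarrow> 'b::metric_space"
  assumes "finite A" "\<And>a n. a \<in> A \<Longrightarrow> F a n \<in> S a" "\<And>a. a \<in> A \<Longrightarrow> compact (S a)"
  shows "\<exists>r l. strict_mono r \<and> (\<forall>a\<in>A. l a \<in> S a \<and> (F a \<circ> r) \<longlonglongrightarrow> l a)"
  using assms
proof (induction A rule: finite_induct)
  case empty
  show ?case by (rule exI[of _ id]) (simp add: strict_mono_def)
next
  case (insert a A)
  then obtain r l where r: "strict_mono r" "\<forall>b\<in>A. l b \<in> S b \<and> (F b \<circ> r) \<longlonglongrightarrow> l b"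
    by blast
  have "seq_compact (S a)" using insert.prems(2) compact_imp_seq_compact by blast
  moreover have "\<forall>n. (F a \<circ> r) n \<in> S a" using insert.prems(1) by simp
  ultimately obtain x r' where r': "x \<in> S a" "strict_mono r'" "(F a \<circ> r \<circ> r') \<longlonglongrightarrow> x"
    unfolding seq_compact_def by blast
  have "\<forall>b\<in>insert a A. (l(a := x)) b \<in> S b \<and> (F b \<circ> (r \<circ> r')) \<longlonglongrightarrow> (l(a := x)) b"
    using r(2) r' LIMSEQ_subseq_LIMSEQ insert.hyps(2) by (fastforce simp: o_assoc)
  then show ?case using strict_mono_o[OF r(1) r'(2)] by blast
qed

lemma abs_coeff_le_pnorm:
  assumes "i \<le> 100" "j \<le> 100 - i"
  shows "\<bar>c i j\<bar> \<le> pnorm c"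
proof -
  have "\<bar>c i j\<bar> \<le> (\<Sum>j\<le>100 - i. \<bar>c i j\<bar>)"
    by (rule member_le_sum) (use assms in auto)
  also have "\<dots> \<le> pnorm c"
    unfolding pnorm_def by (rule member_le_sum[of i _ "\<lambda>i. \<Sum>j\<le>100 - i. \<bar>c i j\<bar>"])
      (use assms in \<open>auto intro: sum_nonneg\<close>)
  finally show ?thesis .
qed

lemma tendsto_poly2:
  assumes "\<And>i j. i \<le> 100 \<Longrightarrow> j \<le> 100 - i \<Longrightarrow> ((\<lambda>n. c n i j) \<longlongrightarrow> c' i j) F"
    and "(x \<longlongrightarrow> x') F" "(y \<longlongrightarrow> y') F"
  shows "((\<lambda>n. poly2 (c n) (x n) (y n)) \<longlongrightarrow> poly2 c' x' y') F"
  unfolding poly2_def using assms by (intro tendsto_sum tendsto_mult tendsto_power) auto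

lemma tendsto_pnorm:
  assumes "\<And>i j. i \<le> 100 \<Longrightarrow> j \<le> 100 - i \<Longrightarrow> ((\<lambda>n. c n i j) \<longlongrightarrow> c' i j) F"
  shows "((\<lambda>n. pnorm (c n)) \<longlongrightarrow> pnorm c') F"
  unfolding pnorm_def using assms by (intro tendsto_sum tendsto_rabs) auto

lemma pnorm_sphere_convergent_subseq:
  fixes c :: "nat \<Rightarrow> nat \<Rightarrow> nat \<Rightarrow> real"
  assumes "\<And>n. pnorm (c n) = 1"
  shows "\<exists>r c'. strict_mono r \<and> pnorm c' = 1 \<and>
    (\<forall>i j. i \<le> 100 \<longrightarrow> j \<le> 100 - i \<longrightarrow> (\<lambda>m. c (r m) i j) \<longlonglongrightarrow> c' i j)"
proof -
  define T where "T = {(i, j). i \<le> (100::nat) \<and> j \<le> 100 - i}"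
  have "finite T" unfolding T_def by (rule finite_subset[of _ "{..100} \<times> {..100}"]) auto
  moreover have "(\<lambda>(i, j) n. c n i j) ij n \<in> {-1..1}" if "ij \<in> T" for ij n
    using that abs_coeff_le_pnorm[of _ _ "c n"] assms by (auto simp: T_def abs_le_iff)
  ultimately obtain r l where r: "strict_mono r"
    and l: "\<forall>(i, j)\<in>T. ((\<lambda>n. c n i j) \<circ> r) \<longlonglongrightarrow> l (i, j)"
    using finite_family_convergent_subseq[of T "\<lambda>(i, j) n. c n i j" "\<lambda>_. {-1..1}"] by fastforce
  define c' where "c' i j = l (i, j)" for i j
  have coeffs: "(\<lambda>m. c (r m) i j) \<longlonglongrightarrow> c' i j" if "i \<le> 100" "j \<le> 100 - i" for i j
    using l that unfolding T_def c'_def by (auto simp: o_def)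
  have "(\<lambda>m. pnorm (c (r m))) \<longlonglongrightarrow> pnorm c'" by (rule tendsto_pnorm[OF coeffs])
  then have "pnorm c' = 1" using assms by (simp add: LIMSEQ_const_iff)
  then show ?thesis using r coeffs by blast
qed

text \<open>The coefficients and the points converge along a common subsequence; the limit
  polynomial is normalized and vanishes at the limit points.\<close>
lemma limit_poly2_vanishes_on_each:
  fixes c :: "nat \<Rightarrow> nat \<Rightarrow> nat \<Rightarrow> real" and q :: "nat \<Rightarrow> (real \<times> real) set \<Rightarrow> real \<times> real"
  assumes "finite I" "\<And>S. S \<in> I \<Longrightarrow> compact S" and c: "\<And>n. pnorm (c n) = 1"
    and q: "\<And>n S. S \<in> I \<Longrightarrow> q n S \<in> S"
    and small: "\<And>S. S \<in> I \<Longrightarrow> (\<lambda>n. poly2 (c n) (fst (q n S)) (snd (q n S))) \<longlonglongrightarrow> 0"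
  shows "\<exists>c'. pnorm c' = 1 \<and> (\<forall>S\<in>I. \<exists>(r, s)\<in>S. poly2 c' r s = 0)"
proof -
  obtain r1 c' where r1: "strict_mono r1" and "pnorm c' = 1"
    and coeffs: "\<forall>i j. i \<le> 100 \<longrightarrow> j \<le> 100 - i \<longrightarrow> (\<lambda>m. c (r1 m) i j) \<longlonglongrightarrow> c' i j"
    using pnorm_sphere_convergent_subseq[of c, OF c] by blast
  obtain r2 x where r2: "strict_mono r2"
    and x: "\<forall>S\<in>I. x S \<in> S \<and> ((\<lambda>m. q (r1 m) S) \<circ> r2) \<longlonglongrightarrow> x S"
    using finite_family_convergent_subseq[of I "\<lambda>S m. q (r1 m) S" id] assms(1,2) q by auto
  have vanish: "poly2 c' (fst (x S)) (snd (x S)) = 0" if S: "S \<in> I" for S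
  proof -
    let ?v = "\<lambda>n. poly2 (c n) (fst (q n S)) (snd (q n S))"
    have "(?v \<circ> (r1 \<circ> r2)) \<longlonglongrightarrow> 0"
      by (rule LIMSEQ_subseq_LIMSEQ[OF small[OF S] strict_mono_o[OF r1 r2]])
    moreover have "(?v \<circ> (r1 \<circ> r2)) \<longlonglongrightarrow> poly2 c' (fst (x S)) (snd (x S))"
    proof -
      have "(\<lambda>m. c (r1 (r2 m)) i j) \<longlonglongrightarrow> c' i j" if "i \<le> 100" "j \<le> 100 - i" for i j
        using LIMSEQ_subseq_LIMSEQ[OF coeffs[rule_format, OF that] r2] by (simp add: o_def)
      moreover have "(\<lambda>m. q (r1 (r2 m)) S) \<longlonglongrightarrow> x S" using x S by (simp add: o_def)
      ultimately show ?thesis unfolding comp_def by (intro tendsto_poly2 tendsto_fst tendsto_snd)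
    qed
    ultimately show ?thesis using LIMSEQ_unique by blast
  qed
  have "\<forall>S\<in>I. x S \<in> S \<and> poly2 c' (fst (x S)) (snd (x S)) = 0" using x vanish by blast
  then show ?thesis using \<open>pnorm c' = 1\<close> unfolding case_prod_beta by blast
qed

lemma uniformly_zero_free_member:
  assumes "finite I" "\<And>S. S \<in> I \<Longrightarrow> compact S"
    and zero_free: "\<And>c. pnorm c = 1 \<Longrightarrow> \<exists>S\<in>I. \<forall>(r, s)\<in>S. poly2 c r s \<noteq> 0"
  shows "\<exists>\<nu>>0. \<forall>c. pnorm c = 1 \<longrightarrow> (\<exists>S\<in>I. \<forall>(r, s)\<in>S. \<nu> \<le> \<bar>poly2 c r s\<bar>)"
proof (rule ccontr)
  assume contra: "\<not> ?thesis"
  have "\<exists>c. pnorm c = 1 \<and> (\<forall>S\<in>I. \<exists>q\<in>S. \<bar>poly2 c (fst q) (snd q)\<bar> < inverse (real (Suc n)))" for n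
  proof -
    have "inverse (real (Suc n)) > 0" by simp
    then obtain c where "pnorm c = 1" "\<not> (\<exists>S\<in>I. \<forall>q\<in>S. inverse (real (Suc n)) \<le> \<bar>poly2 c (fst q) (snd q)\<bar>)"
      using contra unfolding case_prod_beta by blast
    then show ?thesis by (auto simp: not_le)
  qed
  then obtain c where c: "\<And>n. pnorm (c n) = 1"
    and "\<And>n. \<forall>S\<in>I. \<exists>q\<in>S. \<bar>poly2 (c n) (fst q) (snd q)\<bar> < inverse (real (Suc n))"
    by metis
  then have "\<exists>f. \<forall>S\<in>I. f S \<in> S \<and> \<bar>poly2 (c n) (fst (f S)) (snd (f S))\<bar> < inverse (real (Suc n))" for n
    by (intro bchoice) blast
  then obtain q where q: "\<And>n S. S \<in> I \<Longrightarrow> q n S \<in> S"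
    and small: "\<And>n S. S \<in> I \<Longrightarrow> \<bar>poly2 (c n) (fst (q n S)) (snd (q n S))\<bar> < inverse (real (Suc n))"
    by metis
  have "(\<lambda>n. poly2 (c n) (fst (q n S)) (snd (q n S))) \<longlonglongrightarrow> 0" if "S \<in> I" for S
  proof (rule Lim_null_comparison)
    show "\<forall>\<^sub>F n in sequentially. norm (poly2 (c n) (fst (q n S)) (snd (q n S))) \<le> inverse (real (Suc n))"
      using small[OF that] by (auto intro: less_imp_le always_eventually)
  qed (rule LIMSEQ_inverse_real_of_nat)
  then obtain c' where "pnorm c' = 1" "\<forall>S\<in>I. \<exists>(r, s)\<in>S. poly2 c' r s = 0"
    using limit_poly2_vanishes_on_each[of I c q, OF assms(1,2) c q] by blast
  then show False using zero_free by fastforce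
qed

section \<open>Transversality of large families of squares\<close>

lemma finite_Col: "finite (Col K)"
proof -
  have "Col K \<subseteq> (\<lambda>(a, b). dyadic_square K a b) ` ({..<K} \<times> {..<K})" by (auto simp: Col_def)
  then show ?thesis by (rule finite_subset) simp
qed

lemma compact_Col: "S \<in> Col K \<Longrightarrow> compact S"
  by (auto simp: Col_def dyadic_square_eq_Times grid_interval_def intro: compact_Times)

lemma bex_zero_free_square:
  assumes K: "K \<ge> 1" and "pnorm c \<noteq> 0" and I: "I \<subseteq> Col K" "202000 * K < card I"
  shows "\<exists>S\<in>I. \<forall>(r, s)\<in>S. poly2 c r s \<noteq> 0"
proof -
  have "\<not> I \<subseteq> {S \<in> Col K. \<exists>(r, s)\<in>S. poly2 c r s = 0}"
  proof
    assume "I \<subseteq> {S \<in> Col K. \<exists>(r, s)\<in>S. poly2 c r s = 0}"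
    then have "card I \<le> card {S \<in> Col K. \<exists>(r, s)\<in>S. poly2 c r s = 0}"
      by (rule card_mono[rotated]) (simp add: finite_Col)
    also have "\<dots> \<le> 202000 * K" by (rule card_squares_meeting_zeros) fact+
    finally show False using I(2) by simp
  qed
  then show ?thesis using I(1) by blast
qed

lemma transverse_of_card_ge:
  assumes K: "K \<ge> 1"
  shows "\<exists>\<nu>>0. \<forall>C. C \<subseteq> Col K \<and> finite C \<and> real (card C) \<ge> 100000000 * real K \<longrightarrow> transverse \<nu> C"
proof -
  define \<I> where "\<I> = {I. I \<subseteq> Col K \<and> 202000 * K < card I}"
  have "finite \<I>" unfolding \<I>_def using finite_Col by simp
  have "\<forall>I\<in>\<I>. \<exists>\<nu>. \<nu> > 0 \<and> (\<forall>c. pnorm c = 1 \<longrightarrow> (\<exists>S\<in>I. \<forall>(r, s)\<in>S. \<nu> \<le> \<bar>poly2 c r s\<bar>))"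
  proof
    fix I assume "I \<in> \<I>"
    then have I: "I \<subseteq> Col K" "202000 * K < card I" by (auto simp: \<I>_def)
    show "\<exists>\<nu>. \<nu> > 0 \<and> (\<forall>c. pnorm c = 1 \<longrightarrow> (\<exists>S\<in>I. \<forall>(r, s)\<in>S. \<nu> \<le> \<bar>poly2 c r s\<bar>))"
    proof (rule uniformly_zero_free_member)
      show "finite I" using I finite_Col finite_subset by blast
      show "compact S" if "S \<in> I" for S using that I compact_Col by blast
      show "\<exists>S\<in>I. \<forall>(r, s)\<in>S. poly2 c r s \<noteq> 0" if "pnorm c = 1" for c
        using bex_zero_free_square[OF K _ I] that by simp
    qed
  qed
  from bchoice[OF this] obtain \<nu> where \<nu>: "\<And>I. I \<in> \<I> \<Longrightarrow> \<nu> I > 0"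
    "\<And>I c. I \<in> \<I> \<Longrightarrow> pnorm c = 1 \<Longrightarrow> \<exists>S\<in>I. \<forall>(r, s)\<in>S. \<nu> I \<le> \<bar>poly2 c r s\<bar>"
    by blast
  define \<nu>0 where "\<nu>0 = Min (insert 1 (\<nu> ` \<I>))"
  have "\<nu>0 > 0" using \<nu>(1) \<open>finite \<I>\<close> by (simp add: \<nu>0_def)
  moreover have "transverse \<nu>0 C"
    if C: "C \<subseteq> Col K" "finite C" "real (card C) \<ge> 100000000 * real K" for C
    unfolding transverse_def
  proof (intro conjI allI impI)
    show "finite C" by fact
    have "real K \<ge> 1" using K by simp
    then show "card C \<ge> 1000" using C(3) by linarith
    fix c I assume c: "pnorm c = 1" and I: "I \<subseteq> C" "real (card I) \<ge> real (card C) / 100"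
    then have "I \<in> \<I>" using C \<open>real K \<ge> 1\<close> by (auto simp: \<I>_def)
    then obtain S where "S \<in> I" "\<forall>(r, s)\<in>S. \<nu> I \<le> \<bar>poly2 c r s\<bar>" using \<nu>(2) c by blast
    moreover have "\<nu>0 \<le> \<nu> I" using \<open>I \<in> \<I>\<close> \<open>finite \<I>\<close> by (simp add: \<nu>0_def)
    ultimately show "\<exists>S\<in>I. \<forall>(r, s)\<in>S. \<nu>0 \<le> \<bar>poly2 c r s\<bar>" by fastforce
  qed
  ultimately show ?thesis by blast
qed

theorem lemma6p3:
  shows "\<exists>\<Lambda>::real. \<Lambda> > 0 \<and>
    (\<forall>k::nat. \<exists>\<nu>::real. \<nu> > 0 \<and>
       (\<forall>C. C \<subseteq> Col (2 ^ k) \<and> finite C \<and> real (card C) \<ge> \<Lambda> * real ((2::nat) ^ k)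
             \<longrightarrow> transverse \<nu> C))"
  using transverse_of_card_ge[of "2 ^ _"] by (intro exI[of _ "100000000 :: real"]) auto

end
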